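(* For every constant $c_0>0$ there is $C_0>0$ such that for every $C\ge C_0$ the following holds for all sufficiently large $n$. Let $1/n\le\theta\le1$, $p=\lceil Cn\log^3 n\rceil$, and $T:=\dfrac{c_0\,p\sqrt{\theta/n}}{\log n}$. Let $X$ be the $n\times p$ random matrix with iid entries $x_{ij}=\chi_{ij}\xi_{ij}$, $\chi_{ij}$ iid indicators with $\mathbb{P}(\chi_{ij}=1)=\theta$ and $\xi_{ij}$ iid Rademacher, independent of the $\chi$'s. Let $\alpha=2^{l}\cdot\frac{2}{n}$ for an integer $l\ge0$ with $\alpha\le 1$. Then for all $v,w\in\mathbb{R}^n$ with $\|v\|_1\le1$, $\|w\|_1\le1$, $\|v-w\|_\infty\le2\alpha$ and $|\mu_v-\mu_w|\le T/6$, $$\mathbb{P}\Big(\big|\,\|X^Tv\|_1-\|X^Tw\|_1\,\big|\ge T\Big)\le\exp(-5\alpha^{-1}\log n).$$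
   Context: $\mu_v:=\mathbb{E}\|X^Tv\|_1$. Rademacher variables take values $\pm1$ with probability $1/2$ each. *)

theory Defs
  imports "HOL-Probability.Probability"
begin

definition entry_pmf :: "real \<Rightarrow> real pmf" where
  "entry_pmf \<theta> = map_pmf (\<lambda>(c, s). (if c then 1 else 0) * (if s then 1 else -1))
                      (pair_pmf (bernoulli_pmf \<theta>) (bernoulli_pmf (1/2)))"

definition matrix_pmf :: "nat \<Rightarrow> nat \<Rightarrow> real \<Rightarrow> (nat \<times> nat \<Rightarrow> real) pmf" where
  "matrix_pmf n p \<theta> = Pi_pmf ({..<n} \<times> {..<p}) 0 (\<lambda>_. entry_pmf \<theta>)"

definition XT_l1 :: "nat \<Rightarrow> nat \<Rightarrow> (nat \<times> nat \<Rightarrow> real) \<Rightarrow> (nat \<Rightarrow> real) \<Rightarrow> real" where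
  "XT_l1 n p X v = (\<Sum>j<p. \<bar>\<Sum>i<n. X (i, j) * v i\<bar>)"

definition mu :: "nat \<Rightarrow> nat \<Rightarrow> real \<Rightarrow> (nat \<Rightarrow> real) \<Rightarrow> real" where
  "mu n p \<theta> v = measure_pmf.expectation (matrix_pmf n p \<theta>) (\<lambda>X. XT_l1 n p X v)"

end

theory Submission
  imports Defs
begin

text \<open>The increment \<open>\<parallel>X\<^sup>T v\<parallel>\<^sub>1 - \<parallel>X\<^sup>T w\<parallel>\<^sub>1\<close> is a sum of \<open>p\<close> independent column terms
  \<open>\<bar>\<langle>x\<^sub>j, v\<rangle>\<bar> - \<bar>\<langle>x\<^sub>j, w\<rangle>\<bar>\<close>, each dominated by \<open>\<bar>\<langle>x\<^sub>j, v - w\<rangle>\<bar>\<close>. Since the entries are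
  sparse Rademacher variables, the moment generating function of \<open>\<langle>x\<^sub>j, d\<rangle>\<close> is
  \<open>\<Prod>\<^sub>i (1 + \<theta> (cosh (t d\<^sub>i) - 1)) \<le> exp (O(\<theta> t\<^sup>2 \<parallel>d\<parallel>\<^sub>2\<^sup>2))\<close> for small \<open>t\<close>, and the bound
  \<open>e\<^sup>y \<le> 1 + y + y\<^sup>2 e\<^bsup>\<bar>y\<bar>\<^esup> / 2\<close> transfers this sub-Gaussian behaviour to the centred column terms.
  A Chernoff bound with variance proxy \<open>\<parallel>v - w\<parallel>\<^sub>2\<^sup>2 \<le> \<parallel>v - w\<parallel>\<^sub>\<infinity> \<parallel>v - w\<parallel>\<^sub>1 \<le> 4\<alpha>\<close> then bounds the
  probability of a deviation \<open>5T/6\<close> from the mean by \<open>exp (- c c\<^sub>0\<^sup>2 C log n / \<alpha>)\<close>, and the hypothesis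
  \<open>\<bar>\<mu>\<^sub>v - \<mu>\<^sub>w\<bar> \<le> T/6\<close> turns this into the stated tail bound.\<close>

section \<open>Elementary exponential inequalities\<close>

lemma exp_le_one_plus_quadratic: "exp (x::real) \<le> 1 + x + x\<^sup>2 / 2 * exp \<bar>x\<bar>"
proof -
  obtain t where t: "\<bar>t\<bar> \<le> \<bar>x\<bar>" "exp x = (\<Sum>m<2. x ^ m / fact m) + exp t / fact 2 * x\<^sup>2"
    using Maclaurin_exp_le[of x 2] by blast
  have "exp t / 2 * x\<^sup>2 \<le> exp \<bar>x\<bar> / 2 * x\<^sup>2"
    using t(1) by (intro mult_right_mono) auto
  then show ?thesis
    using t(2) by (simp add: eval_nat_numeral algebra_simps)
qed

lemma exp_le_one_plus_three_times:
  assumes "0 \<le> x" "x \<le> (1::real)"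
  shows "exp x \<le> 1 + 3 * x"
proof -
  have "exp x \<le> 3"
    using assms exp_le by (smt (verit) exp_le_cancel_iff)
  moreover have "x\<^sup>2 \<le> x"
    using assms by (simp add: power2_eq_square mult_left_le_one_le)
  ultimately have "x\<^sup>2 * exp x \<le> x * 3"
    using assms by (intro mult_mono) auto
  then show ?thesis
    using exp_le_one_plus_quadratic[of x] assms by simp
qed

lemma cosh_le_one_plus_sq:
  assumes "\<bar>z\<bar> \<le> (1::real)"
  shows "cosh z \<le> 1 + 3 / 2 * z\<^sup>2"
proof -
  have "exp \<bar>z\<bar> \<le> 3"
    using assms exp_le by (smt (verit) exp_le_cancel_iff)
  then have "z\<^sup>2 / 2 * exp \<bar>z\<bar> \<le> z\<^sup>2 / 2 * 3"
    by (intro mult_left_mono) auto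
  moreover have "cosh z = (exp z + exp (-z)) / 2"
    by (rule cosh_field_def)
  ultimately show ?thesis
    using exp_le_one_plus_quadratic[of z] exp_le_one_plus_quadratic[of "-z"] by simp
qed

lemma sq_mult_exp_le_cosh:
  assumes "0 \<le> (t::real)"
  shows "t\<^sup>2 * exp t \<le> 4 * (cosh (2 * t) - 1)"
proof -
  define u where "u = exp t"
  have u: "1 \<le> u"
    using assms by (simp add: u_def)
  have "t\<^sup>2 \<le> 2 * (u + 1 / u - 2)"
    using exp_lower_Taylor_quadratic[OF assms] exp_ge_add_one_self[of "-t"]
    by (simp add: u_def exp_minus inverse_eq_divide)
  then have "t\<^sup>2 * u \<le> 2 * (u + 1 / u - 2) * u"
    using u by (intro mult_right_mono) auto
  also have "\<dots> = 2 * (u - 1)\<^sup>2"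
    using u by (simp add: field_simps power2_eq_square)
  also have "\<dots> \<le> 2 * (u - 1 / u)\<^sup>2"
    using u by (intro mult_left_mono power_mono) (auto simp: field_simps)
  also have "\<dots> = 2 * (u\<^sup>2 + 1 / u\<^sup>2 - 2)"
    using u by (simp add: field_simps power2_eq_square)
  also have "u\<^sup>2 + 1 / u\<^sup>2 = 2 * cosh (2 * t)"
    by (simp add: cosh_field_def u_def exp_minus inverse_eq_divide power2_eq_square
        flip: exp_add)
  finally show ?thesis
    by (simp add: u_def)
qed

section \<open>The random matrix as a product of independent columns\<close>

lemma finite_set_pmf_entry: "finite (set_pmf (entry_pmf \<theta>))"
  unfolding entry_pmf_def set_map_pmf by (rule finite_imageI) simp

lemma expectation_exp_entry:
  assumes "0 \<le> \<theta>" "\<theta> \<le> 1"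
  shows "measure_pmf.expectation (entry_pmf \<theta>) (\<lambda>x. exp (z * x)) = 1 + \<theta> * (cosh z - 1)"
proof -
  have U: "(UNIV :: (bool \<times> bool) set) = {(True, True), (True, False), (False, True), (False, False)}"
    by auto
  have "measure_pmf.expectation (entry_pmf \<theta>) (\<lambda>x. exp (z * x))
      = (\<Sum>a\<in>UNIV. pmf (pair_pmf (bernoulli_pmf \<theta>) (bernoulli_pmf (1/2))) a *\<^sub>R
          exp (z * ((\<lambda>(c, s). (if c then 1 else 0) * (if s then 1 else -1)) a)))"
    unfolding entry_pmf_def integral_map_pmf by (rule integral_measure_pmf) auto
  also have "\<dots> = \<theta> / 2 * exp z + \<theta> / 2 * exp (- z) + (1 - \<theta>)"
    using assms by (simp add: U pmf_pair algebra_simps)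
  also have "\<dots> = 1 + \<theta> * (cosh z - 1)"
    by (simp add: cosh_field_def algebra_simps)
  finally show ?thesis .
qed

lemma finite_set_pmf_Pi_pmf:
  assumes "finite A" "\<And>x. x \<in> A \<Longrightarrow> finite (set_pmf (p x))"
  shows "finite (set_pmf (Pi_pmf A d p))"
  using assms by (simp add: set_Pi_pmf finite_PiE_dflt)

lemma Pi_pmf_Times:
  assumes A: "finite A" and B: "finite B"
  shows "Pi_pmf (A \<times> B) d (\<lambda>_. e) =
         map_pmf (\<lambda>M x. M (snd x) (fst x)) (Pi_pmf B (\<lambda>_. d) (\<lambda>_. Pi_pmf A d (\<lambda>_. e)))"
proof (rule pmf_eqI)
  fix X :: "'a \<times> 'b \<Rightarrow> 'c"
  define f :: "('b \<Rightarrow> 'a \<Rightarrow> 'c) \<Rightarrow> 'a \<times> 'b \<Rightarrow> 'c" where "f = (\<lambda>M x. M (snd x) (fst x))"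
  define M where "M = (\<lambda>j i. X (i, j))"
  have "inj f"
    unfolding f_def inj_def fun_eq_iff by auto
  moreover have X: "X = f M"
    by (simp add: f_def M_def)
  ultimately have "pmf (map_pmf f (Pi_pmf B (\<lambda>_. d) (\<lambda>_. Pi_pmf A d (\<lambda>_. e)))) X
      = pmf (Pi_pmf B (\<lambda>_. d) (\<lambda>_. Pi_pmf A d (\<lambda>_. e))) M"
    by (simp add: pmf_map_inj')
  also have "\<dots> = pmf (Pi_pmf (A \<times> B) d (\<lambda>_. e)) X"
  proof (cases "\<forall>x. x \<notin> A \<times> B \<longrightarrow> X x = d")
    case True
    have "pmf (Pi_pmf B (\<lambda>_. d) (\<lambda>_. Pi_pmf A d (\<lambda>_. e))) M
        = (\<Prod>j\<in>B. pmf (Pi_pmf A d (\<lambda>_. e)) (M j))"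
      using True B by (subst pmf_Pi) (auto simp: M_def fun_eq_iff)
    also have "\<dots> = (\<Prod>j\<in>B. \<Prod>i\<in>A. pmf e (X (i, j)))"
      using True A by (intro prod.cong refl) (subst pmf_Pi, auto simp: M_def)
    also have "\<dots> = (\<Prod>x\<in>A \<times> B. pmf e (X x))"
      by (subst prod.swap) (simp add: prod.cartesian_product case_prod_beta')
    also have "\<dots> = pmf (Pi_pmf (A \<times> B) d (\<lambda>_. e)) X"
      using True A B by (subst pmf_Pi) auto
    finally show ?thesis .
  next
    case False
    then obtain i j where ij: "(i, j) \<notin> A \<times> B" "X (i, j) \<noteq> d"
      by auto
    have "pmf (Pi_pmf B (\<lambda>_. d) (\<lambda>_. Pi_pmf A d (\<lambda>_. e))) M = 0"
    proof (cases "j \<in> B")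
      case False
      then have "M j \<noteq> (\<lambda>_. d)"
        using ij by (auto simp: M_def fun_eq_iff)
      then show ?thesis
        using B False by (subst pmf_Pi) auto
    next
      case True
      then have "pmf (Pi_pmf A d (\<lambda>_. e)) (M j) = 0"
        using A ij by (subst pmf_Pi) (auto simp: M_def)
      then show ?thesis
        using True B by (subst pmf_Pi) (auto intro: prod_zero)
    qed
    moreover have "pmf (Pi_pmf (A \<times> B) d (\<lambda>_. e)) X = 0"
      using False A B by (subst pmf_Pi) auto
    ultimately show ?thesis
      by simp
  qed
  finally show "pmf (Pi_pmf (A \<times> B) d (\<lambda>_. e)) X =
      pmf (map_pmf (\<lambda>M x. M (snd x) (fst x)) (Pi_pmf B (\<lambda>_. d) (\<lambda>_. Pi_pmf A d (\<lambda>_. e)))) X"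
    by (simp add: f_def)
qed

definition column_pmf :: "nat \<Rightarrow> real \<Rightarrow> (nat \<Rightarrow> real) pmf" where
  "column_pmf n \<theta> = Pi_pmf {..<n} 0 (\<lambda>_. entry_pmf \<theta>)"

definition columns_pmf :: "nat \<Rightarrow> nat \<Rightarrow> real \<Rightarrow> (nat \<Rightarrow> nat \<Rightarrow> real) pmf" where
  "columns_pmf n p \<theta> = Pi_pmf {..<p} (\<lambda>_. 0) (\<lambda>_. column_pmf n \<theta>)"

lemma matrix_pmf_conv_columns:
  "matrix_pmf n p \<theta> = map_pmf (\<lambda>M x. M (snd x) (fst x)) (columns_pmf n p \<theta>)"
  unfolding matrix_pmf_def columns_pmf_def column_pmf_def by (rule Pi_pmf_Times) auto

lemma finite_set_pmf_column: "finite (set_pmf (column_pmf n \<theta>))"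
  unfolding column_pmf_def by (rule finite_set_pmf_Pi_pmf) (auto simp: finite_set_pmf_entry)

lemma finite_set_pmf_columns: "finite (set_pmf (columns_pmf n p \<theta>))"
  unfolding columns_pmf_def by (rule finite_set_pmf_Pi_pmf) (auto simp: finite_set_pmf_column)

lemma finite_set_pmf_matrix: "finite (set_pmf (matrix_pmf n p \<theta>))"
  by (simp add: matrix_pmf_conv_columns finite_set_pmf_columns)

lemma integrable_column_pmf [simp]: "integrable (measure_pmf (column_pmf n \<theta>)) (f :: _ \<Rightarrow> real)"
  by (simp add: integrable_measure_pmf_finite finite_set_pmf_column)

lemma integrable_columns_pmf [simp]: "integrable (measure_pmf (columns_pmf n p \<theta>)) (f :: _ \<Rightarrow> real)"
  by (simp add: integrable_measure_pmf_finite finite_set_pmf_columns)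

lemma integrable_matrix_pmf [simp]: "integrable (measure_pmf (matrix_pmf n p \<theta>)) (f :: _ \<Rightarrow> real)"
  by (simp add: integrable_measure_pmf_finite finite_set_pmf_matrix)

lemma expectation_prod_columns:
  fixes F :: "(nat \<Rightarrow> real) \<Rightarrow> real"
  assumes "\<And>c. 0 \<le> F c"
  shows "measure_pmf.expectation (matrix_pmf n p \<theta>) (\<lambda>X. \<Prod>j<p. F (\<lambda>i. X (i, j)))
       = measure_pmf.expectation (column_pmf n \<theta>) F ^ p"
proof -
  have "measure_pmf.expectation (matrix_pmf n p \<theta>) (\<lambda>X. \<Prod>j<p. F (\<lambda>i. X (i, j)))
      = measure_pmf.expectation (columns_pmf n p \<theta>) (\<lambda>M. \<Prod>j\<in>{..<p}. F (M j))"
    unfolding matrix_pmf_conv_columns by (subst integral_map_pmf) simp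
  also have "\<dots> = (\<Prod>j\<in>{..<p}. measure_pmf.expectation (column_pmf n \<theta>) F)"
    unfolding columns_pmf_def by (rule expectation_prod_Pi_pmf) (auto simp: assms)
  finally show ?thesis
    by simp
qed

lemma expectation_sum_columns:
  fixes G :: "(nat \<Rightarrow> real) \<Rightarrow> real"
  shows "measure_pmf.expectation (matrix_pmf n p \<theta>) (\<lambda>X. \<Sum>j<p. G (\<lambda>i. X (i, j)))
     = real p * measure_pmf.expectation (column_pmf n \<theta>) G"
proof -
  have column: "map_pmf (\<lambda>M. M j) (columns_pmf n p \<theta>) = column_pmf n \<theta>" if "j < p" for j
    unfolding columns_pmf_def using that by (subst Pi_pmf_component) auto
  have "measure_pmf.expectation (matrix_pmf n p \<theta>) (\<lambda>X. \<Sum>j<p. G (\<lambda>i. X (i, j)))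
      = (\<Sum>j<p. measure_pmf.expectation (map_pmf (\<lambda>M. M j) (columns_pmf n p \<theta>)) G)"
    by (simp add: matrix_pmf_conv_columns Bochner_Integration.integral_sum)
  also have "\<dots> = (\<Sum>j<p. measure_pmf.expectation (column_pmf n \<theta>) G)"
    by (intro sum.cong refl) (simp add: column)
  finally show ?thesis
    by simp
qed

section \<open>Exponential moments of a single column\<close>

lemma expectation_exp_inner_column:
  assumes "0 \<le> \<theta>" "\<theta> \<le> 1"
  shows "measure_pmf.expectation (column_pmf n \<theta>) (\<lambda>c. exp (t * (\<Sum>i<n. c i * d i)))
       = (\<Prod>i<n. 1 + \<theta> * (cosh (t * d i) - 1))"
proof -
  have "measure_pmf.expectation (column_pmf n \<theta>) (\<lambda>c. exp (t * (\<Sum>i<n. c i * d i)))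
      = measure_pmf.expectation (column_pmf n \<theta>) (\<lambda>c. \<Prod>i\<in>{..<n}. exp (t * d i * c i))"
    by (simp add: sum_distrib_left exp_sum mult_ac)
  also have "\<dots> = (\<Prod>i\<in>{..<n}. measure_pmf.expectation (entry_pmf \<theta>) (\<lambda>x. exp (t * d i * x)))"
    unfolding column_pmf_def
    by (rule expectation_prod_Pi_pmf) (auto simp: integrable_measure_pmf_finite finite_set_pmf_entry)
  finally show ?thesis
    using assms by (simp add: expectation_exp_entry)
qed

lemma expectation_exp_inner_column_le:
  assumes "0 \<le> \<theta>" "\<theta> \<le> 1" "\<forall>i<n. \<bar>t * d i\<bar> \<le> 1" "3 / 2 * \<theta> * t\<^sup>2 * (\<Sum>i<n. (d i)\<^sup>2) \<le> 1"
  shows "measure_pmf.expectation (column_pmf n \<theta>) (\<lambda>c. exp (t * (\<Sum>i<n. c i * d i)))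
       \<le> 1 + 9 / 2 * \<theta> * t\<^sup>2 * (\<Sum>i<n. (d i)\<^sup>2)"
proof -
  have "(\<Prod>i<n. 1 + \<theta> * (cosh (t * d i) - 1)) \<le> exp (\<Sum>i<n. \<theta> * (cosh (t * d i) - 1))"
    using assms by (intro prod_le_exp_sum) (simp add: cosh_real_ge_1)
  also have "(\<Sum>i<n. \<theta> * (cosh (t * d i) - 1)) \<le> (\<Sum>i<n. \<theta> * (3 / 2 * (t * d i)\<^sup>2))"
  proof (intro sum_mono mult_left_mono)
    fix i assume "i \<in> {..<n}"
    then show "cosh (t * d i) - 1 \<le> 3 / 2 * (t * d i)\<^sup>2"
      using assms cosh_le_one_plus_sq[of "t * d i"] by simp
  qed (use assms in auto)
  also have "\<dots> = 3 / 2 * \<theta> * t\<^sup>2 * (\<Sum>i<n. (d i)\<^sup>2)"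
    by (simp add: sum_distrib_left power_mult_distrib mult_ac)
  also have "exp \<dots> \<le> 1 + 3 * (3 / 2 * \<theta> * t\<^sup>2 * (\<Sum>i<n. (d i)\<^sup>2))"
    using assms by (intro exp_le_one_plus_three_times) (auto intro!: sum_nonneg mult_nonneg_nonneg)
  finally show ?thesis
    using assms by (simp add: expectation_exp_inner_column)
qed

text \<open>The factor \<open>exp (t * \<bar>Y\<bar>)\<close> is absorbed into \<open>cosh (2 * t * Y)\<close>, whose expectation is
  controlled by the moment generating function of \<open>Y\<close>.\<close>
lemma expectation_sq_exp_abs_inner_column_le:
  assumes "0 \<le> \<theta>" "\<theta> \<le> 1" "0 < t" "\<forall>i<n. 2 * t * \<bar>d i\<bar> \<le> 1"
    "6 * \<theta> * t\<^sup>2 * (\<Sum>i<n. (d i)\<^sup>2) \<le> 1"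
  shows "measure_pmf.expectation (column_pmf n \<theta>)
           (\<lambda>c. (\<Sum>i<n. c i * d i)\<^sup>2 * exp (t * \<bar>\<Sum>i<n. c i * d i\<bar>))
       \<le> 72 * \<theta> * (\<Sum>i<n. (d i)\<^sup>2)"
proof -
  define K where "K = (\<Sum>i<n. (d i)\<^sup>2)"
  define Y where "Y = (\<lambda>c. \<Sum>i<n. c i * d i)"
  define E :: "((nat \<Rightarrow> real) \<Rightarrow> real) \<Rightarrow> real"
    where "E = measure_pmf.expectation (column_pmf n \<theta>)"
  have pointwise: "(Y c)\<^sup>2 * exp (t * \<bar>Y c\<bar>)
      \<le> 2 / t\<^sup>2 * (exp (2 * t * Y c) + exp (- (2 * t) * Y c) - 2)" for c
  proof -
    have "(t * \<bar>Y c\<bar>)\<^sup>2 * exp (t * \<bar>Y c\<bar>) \<le> 4 * (cosh (2 * (t * \<bar>Y c\<bar>)) - 1)"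
      using assms by (intro sq_mult_exp_le_cosh) auto
    also have "cosh (2 * (t * \<bar>Y c\<bar>)) = (exp (2 * t * Y c) + exp (- (2 * t) * Y c)) / 2"
      by (cases "0 \<le> Y c") (auto simp: cosh_field_def mult_ac)
    finally show ?thesis
      using assms by (simp add: field_simps power_mult_distrib)
  qed
  have mgf: "E (\<lambda>c. exp (s * Y c)) \<le> 1 + 18 * \<theta> * t\<^sup>2 * K" if "\<bar>s\<bar> = 2 * t" for s
  proof -
    have "s\<^sup>2 = (2 * t)\<^sup>2"
      using that by (metis power2_abs)
    then have "s\<^sup>2 = 4 * t\<^sup>2"
      by (simp add: power_mult_distrib)
    moreover have "\<forall>i<n. \<bar>s * d i\<bar> \<le> 1"
      using assms that by (simp add: abs_mult)
    ultimately show ?thesis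
      using expectation_exp_inner_column_le[of \<theta> n s d] assms by (simp add: E_def Y_def K_def)
  qed
  have "E (\<lambda>c. (Y c)\<^sup>2 * exp (t * \<bar>Y c\<bar>))
      \<le> E (\<lambda>c. 2 / t\<^sup>2 * (exp (2 * t * Y c) + exp (- (2 * t) * Y c) - 2))"
    unfolding E_def by (intro integral_mono pointwise) auto
  also have "\<dots> = 2 / t\<^sup>2 * (E (\<lambda>c. exp (2 * t * Y c)) + E (\<lambda>c. exp (- (2 * t) * Y c)) - 2)"
    by (simp add: E_def)
  also have "\<dots> \<le> 2 / t\<^sup>2 * ((1 + 18 * \<theta> * t\<^sup>2 * K) + (1 + 18 * \<theta> * t\<^sup>2 * K) - 2)"
    using mgf[of "2 * t"] mgf[of "- (2 * t)"] assms by (intro mult_left_mono add_mono diff_right_mono) auto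
  also have "\<dots> = 72 * \<theta> * K"
    using assms by (simp add: field_simps)
  finally show ?thesis
    by (simp add: E_def Y_def K_def)
qed

lemma expectation_exp_increment_column_le:
  assumes "0 \<le> \<theta>" "\<theta> \<le> 1" "0 < t" "\<forall>i<n. 2 * t * \<bar>v i - w i\<bar> \<le> 1"
    "6 * \<theta> * t\<^sup>2 * (\<Sum>i<n. (v i - w i)\<^sup>2) \<le> 1"
  defines "g \<equiv> \<lambda>c. \<bar>\<Sum>i<n. c i * v i\<bar> - \<bar>\<Sum>i<n. c i * w i\<bar>"
  shows "measure_pmf.expectation (column_pmf n \<theta>) (\<lambda>c. exp (t * g c))
       \<le> exp (t * measure_pmf.expectation (column_pmf n \<theta>) g + 36 * t\<^sup>2 * \<theta> * (\<Sum>i<n. (v i - w i)\<^sup>2))"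
proof -
  define Y where "Y = (\<lambda>c. \<Sum>i<n. c i * (v i - w i))"
  define E :: "((nat \<Rightarrow> real) \<Rightarrow> real) \<Rightarrow> real"
    where "E = measure_pmf.expectation (column_pmf n \<theta>)"
  have g_le_Y: "\<bar>g c\<bar> \<le> \<bar>Y c\<bar>" for c
  proof -
    have "Y c = (\<Sum>i<n. c i * v i) - (\<Sum>i<n. c i * w i)"
      by (simp add: Y_def right_diff_distrib sum_subtractf)
    then show ?thesis
      unfolding g_def by linarith
  qed
  have pointwise: "exp (t * g c) \<le> 1 + t * g c + t\<^sup>2 / 2 * ((Y c)\<^sup>2 * exp (t * \<bar>Y c\<bar>))" for c
  proof -
    have "(t * g c)\<^sup>2 / 2 * exp \<bar>t * g c\<bar> \<le> t\<^sup>2 * (Y c)\<^sup>2 / 2 * exp (t * \<bar>Y c\<bar>)"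
      using g_le_Y[of c] assms
      by (intro mult_mono divide_right_mono) (auto simp: power_mult_distrib abs_le_square_iff abs_mult)
    then show ?thesis
      using exp_le_one_plus_quadratic[of "t * g c"] by simp
  qed
  have "E (\<lambda>c. exp (t * g c)) \<le> E (\<lambda>c. 1 + t * g c + t\<^sup>2 / 2 * ((Y c)\<^sup>2 * exp (t * \<bar>Y c\<bar>)))"
    unfolding E_def by (intro integral_mono pointwise) auto
  also have "\<dots> = 1 + t * E g + t\<^sup>2 / 2 * E (\<lambda>c. (Y c)\<^sup>2 * exp (t * \<bar>Y c\<bar>))"
    by (simp add: E_def)
  also have "\<dots> \<le> 1 + t * E g + t\<^sup>2 / 2 * (72 * \<theta> * (\<Sum>i<n. (v i - w i)\<^sup>2))"
    using expectation_sq_exp_abs_inner_column_le[of \<theta> t n "\<lambda>i. v i - w i"] assms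
    by (intro add_left_mono mult_left_mono) (auto simp: E_def Y_def)
  also have "\<dots> \<le> exp (t * E g + 36 * t\<^sup>2 * \<theta> * (\<Sum>i<n. (v i - w i)\<^sup>2))"
    using exp_ge_add_one_self[of "t * E g + 36 * t\<^sup>2 * \<theta> * (\<Sum>i<n. (v i - w i)\<^sup>2)"]
    by (simp add: algebra_simps)
  finally show ?thesis
    by (simp add: E_def)
qed
section \<open>Concentration of the increment\<close>

lemma XT_l1_increment_upper_tail:
  assumes "0 \<le> \<theta>" "\<theta> \<le> 1" "0 < t" "\<forall>i<n. 2 * t * \<bar>v i - w i\<bar> \<le> 1"
    "6 * \<theta> * t\<^sup>2 * (\<Sum>i<n. (v i - w i)\<^sup>2) \<le> 1"
  shows "measure_pmf.prob (matrix_pmf n p \<theta>)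
           {X. mu n p \<theta> v - mu n p \<theta> w + s \<le> XT_l1 n p X v - XT_l1 n p X w}
         \<le> exp (- t * s + real p * (36 * t\<^sup>2 * \<theta> * (\<Sum>i<n. (v i - w i)\<^sup>2)))"
proof -
  define K where "K = (\<Sum>i<n. (v i - w i)\<^sup>2)"
  define g where "g = (\<lambda>c. \<bar>\<Sum>i<n. c i * v i\<bar> - \<bar>\<Sum>i<n. c i * w i\<bar>)"
  define M where "M = matrix_pmf n p \<theta>"
  define D where "D = (\<lambda>X. XT_l1 n p X v - XT_l1 n p X w)"
  define m where "m = mu n p \<theta> v - mu n p \<theta> w"
  have D_sum_columns: "D X = (\<Sum>j<p. g (\<lambda>i. X (i, j)))" for X
    by (simp add: D_def XT_l1_def g_def sum_subtractf)
  have mu_columns: "mu n p \<theta> u = real p * measure_pmf.expectation (column_pmf n \<theta>) (\<lambda>c. \<bar>\<Sum>i<n. c i * u i\<bar>)"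
    for u
    unfolding mu_def XT_l1_def by (rule expectation_sum_columns)
  have m_columns: "m = real p * measure_pmf.expectation (column_pmf n \<theta>) g"
    unfolding m_def mu_columns g_def by (simp add: right_diff_distrib)
  have "measure_pmf.prob M {X. m + s \<le> D X} = measure_pmf.expectation M (indicator {X. m + s \<le> D X})"
    by simp
  also have "\<dots> \<le> measure_pmf.expectation M (\<lambda>X. exp (t * (D X - m - s)))"
    using assms(3) unfolding M_def by (intro integral_mono) (auto simp: indicator_def)
  also have "(\<lambda>X. exp (t * (D X - m - s)))
      = (\<lambda>X. exp (- t * (m + s)) * (\<Prod>j<p. exp (t * g (\<lambda>i. X (i, j)))))"
    by (simp add: fun_eq_iff D_sum_columns sum_distrib_left algebra_simps flip: exp_add exp_sum)
  also have "measure_pmf.expectation M \<dots>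
      = exp (- t * (m + s)) * measure_pmf.expectation M (\<lambda>X. \<Prod>j<p. exp (t * g (\<lambda>i. X (i, j))))"
    by simp
  also have "\<dots> = exp (- t * (m + s)) * measure_pmf.expectation (column_pmf n \<theta>) (\<lambda>c. exp (t * g c)) ^ p"
    unfolding M_def by (subst expectation_prod_columns) auto
  also have "\<dots> \<le> exp (- t * (m + s)) * exp (t * measure_pmf.expectation (column_pmf n \<theta>) g + 36 * t\<^sup>2 * \<theta> * K) ^ p"
    using expectation_exp_increment_column_le[OF assms] unfolding g_def K_def
    by (intro mult_left_mono power_mono) (auto intro!: integral_nonneg_AE)
  also have "\<dots> = exp (- t * (m + s)) * exp (real p * (t * measure_pmf.expectation (column_pmf n \<theta>) g + 36 * t\<^sup>2 * \<theta> * K))"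
    by (simp add: exp_of_nat_mult)
  also have "\<dots> = exp (- t * s + real p * (36 * t\<^sup>2 * \<theta> * K))"
    by (simp add: m_columns flip: exp_add) (simp add: algebra_simps)
  finally show ?thesis
    by (simp add: M_def D_def m_def K_def)
qed

lemma XT_l1_increment_deviation:
  assumes "0 \<le> \<theta>" "\<theta> \<le> 1" "0 < t" "\<forall>i<n. 2 * t * \<bar>v i - w i\<bar> \<le> 1"
    "6 * \<theta> * t\<^sup>2 * (\<Sum>i<n. (v i - w i)\<^sup>2) \<le> 1"
    "\<bar>mu n p \<theta> v - mu n p \<theta> w\<bar> + s \<le> T"
  shows "measure_pmf.prob (matrix_pmf n p \<theta>) {X. T \<le> \<bar>XT_l1 n p X v - XT_l1 n p X w\<bar>}
         \<le> 2 * exp (- t * s + real p * (36 * t\<^sup>2 * \<theta> * (\<Sum>i<n. (v i - w i)\<^sup>2)))"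
proof -
  define M where "M = measure_pmf.prob (matrix_pmf n p \<theta>)"
  define B where "B = exp (- t * s + real p * (36 * t\<^sup>2 * \<theta> * (\<Sum>i<n. (v i - w i)\<^sup>2)))"
  have "(\<Sum>i<n. (w i - v i)\<^sup>2) = (\<Sum>i<n. (v i - w i)\<^sup>2)"
    by (simp add: power2_commute)
  moreover have "\<forall>i<n. 2 * t * \<bar>w i - v i\<bar> \<le> 1"
    using assms(4) by (simp add: abs_minus_commute)
  ultimately have lower: "M {X. mu n p \<theta> w - mu n p \<theta> v + s \<le> XT_l1 n p X w - XT_l1 n p X v} \<le> B"
    using XT_l1_increment_upper_tail[OF assms(1-3), of n w v p s] assms(5) by (simp add: M_def B_def)
  have upper: "M {X. mu n p \<theta> v - mu n p \<theta> w + s \<le> XT_l1 n p X v - XT_l1 n p X w} \<le> B"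
    unfolding M_def B_def by (rule XT_l1_increment_upper_tail[OF assms(1-5)])
  define U where "U = {X. mu n p \<theta> v - mu n p \<theta> w + s \<le> XT_l1 n p X v - XT_l1 n p X w}"
  define L where "L = {X. mu n p \<theta> w - mu n p \<theta> v + s \<le> XT_l1 n p X w - XT_l1 n p X v}"
  have "{X. T \<le> \<bar>XT_l1 n p X v - XT_l1 n p X w\<bar>} \<subseteq> U \<union> L"
    using assms(6) by (auto simp: U_def L_def abs_if split: if_split_asm)
  then have "M {X. T \<le> \<bar>XT_l1 n p X v - XT_l1 n p X w\<bar>} \<le> M (U \<union> L)"
    unfolding M_def by (intro measure_pmf.finite_measure_mono) auto
  also have "\<dots> \<le> M U + M L"
    unfolding M_def by (intro measure_Un_le) auto
  also have "\<dots> \<le> 2 * B"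
    using upper lower by (simp add: U_def L_def)
  finally show ?thesis
    by (simp add: M_def B_def)
qed
lemma sum_sq_diff_le:
  assumes "(\<Sum>i\<in>I. \<bar>v i\<bar>) \<le> 1" "(\<Sum>i\<in>I. \<bar>w i\<bar>) \<le> 1" "\<forall>i\<in>I. \<bar>v i - w i\<bar> \<le> \<delta>" "0 \<le> \<delta>"
  shows "(\<Sum>i\<in>I. (v i - w i :: real)\<^sup>2) \<le> 2 * \<delta>"
proof -
  have "(\<Sum>i\<in>I. (v i - w i)\<^sup>2) \<le> (\<Sum>i\<in>I. \<delta> * (\<bar>v i\<bar> + \<bar>w i\<bar>))"
  proof (intro sum_mono)
    fix i assume "i \<in> I"
    then have "\<bar>v i - w i\<bar> * \<bar>v i - w i\<bar> \<le> \<delta> * (\<bar>v i\<bar> + \<bar>w i\<bar>)"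
      using assms(3) by (intro mult_mono) auto
    then show "(v i - w i)\<^sup>2 \<le> \<delta> * (\<bar>v i\<bar> + \<bar>w i\<bar>)"
      by (simp add: power2_eq_square)
  qed
  also have "\<dots> = \<delta> * ((\<Sum>i\<in>I. \<bar>v i\<bar>) + (\<Sum>i\<in>I. \<bar>w i\<bar>))"
    by (simp add: sum.distrib flip: sum_distrib_left)
  also have "\<dots> \<le> \<delta> * 2"
    using assms by (intro mult_left_mono) auto
  finally show ?thesis
    by simp
qed

text \<open>The rate \<open>t\<close> minimises \<open>- t * s + 144 * p * \<theta> * \<alpha> * t\<^sup>2\<close>, the Chernoff exponent with
  \<open>s = 5 * T / 6\<close> and the variance proxy bounded via \<open>\<Sum>i. (v i - w i)\<^sup>2 \<le> 4 * \<alpha>\<close>; its value is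
  \<open>- t * s / 2 \<le> - 25 / 20736 * C * c0\<^sup>2 * L / \<alpha>\<close>, which explains the threshold \<open>C \<ge> 10000 / c0\<^sup>2\<close>.\<close>
lemma chernoff_rate_bounds:
  fixes c0 C n p \<theta> \<alpha> L :: real
  assumes c0: "0 < c0" and C: "10000 / c0\<^sup>2 \<le> C" and L: "c0 + 1 \<le> L"
    and \<theta>: "1 / n \<le> \<theta>" and p: "C * n * L ^ 3 \<le> p"
    and \<alpha>: "0 < \<alpha>" "2 \<le> n * \<alpha>" and T: "T = c0 * p * sqrt (\<theta> / n) / L"
  defines "t \<equiv> 5 / 6 * T / (288 * p * \<theta> * \<alpha>)"
  shows "0 < t" "4 * t * \<alpha> \<le> 1" "24 * \<theta> * t\<^sup>2 * \<alpha> \<le> 1"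
    "- t * (5 / 6 * T) + p * (36 * t\<^sup>2 * \<theta> * (4 * \<alpha>)) \<le> - (10 * L / \<alpha>)"
proof -
  define s where "s = 5 / 6 * T"
  have t_s: "t = s / (288 * p * \<theta> * \<alpha>)"
    by (simp add: t_def s_def)
  have n: "0 < n"
    using \<alpha> by (smt (verit) mult_nonpos_nonneg)
  have Lpos: "0 < L" and c0L: "c0 / L \<le> 1"
    using L c0 by auto
  have \<theta>pos: "0 < \<theta>"
    using \<theta> n by (smt (verit) divide_pos_pos)
  have Cc0: "10000 \<le> C * c0\<^sup>2"
    using C c0 by (simp add: field_simps)
  have "0 < 10000 / c0\<^sup>2"
    using c0 by simp
  then have "0 < C"
    using C by linarith
  then have "0 < C * n * L ^ 3"
    using n Lpos by simp
  then have ppos: "0 < p"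
    using p by linarith
  define r where "r = sqrt (\<theta> / n)"
  have r: "0 < r" "r\<^sup>2 = \<theta> / n"
    using \<theta>pos n by (auto simp: r_def)
  have "r\<^sup>2 \<le> \<theta>\<^sup>2"
    using \<theta> \<theta>pos r(2) by (simp add: power2_eq_square divide_inverse mult_left_mono)
  then have r\<theta>: "r / \<theta> \<le> 1"
    using r \<theta>pos power2_le_imp_le[of r \<theta>] by simp
  have s_pos: "0 < s"
    unfolding s_def T using c0 ppos r Lpos by (simp add: r_def)
  then show "0 < t"
    unfolding t_s using ppos \<theta>pos \<alpha> by simp
  have "4 * t * \<alpha> = 5 / 432 * (c0 / L) * (r / \<theta>)"
    unfolding t_s s_def T r_def[symmetric] using ppos \<theta>pos \<alpha> Lpos by (simp add: field_simps)
  also have "\<dots> \<le> 5 / 432 * 1 * 1"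
    using c0 Lpos r \<theta>pos c0L r\<theta> by (intro mult_mono) auto
  finally show "4 * t * \<alpha> \<le> 1"
    by simp
  have "24 * \<theta> * t\<^sup>2 * \<alpha> = 25 / 124416 * (c0 / L)\<^sup>2 * (1 / (n * \<alpha>))"
    unfolding t_s s_def T r_def[symmetric] using ppos \<theta>pos \<alpha> Lpos n r
    by (simp add: field_simps power2_eq_square)
  also have "\<dots> \<le> 25 / 124416 * 1 * 1"
    using c0 Lpos c0L \<alpha> n by (intro mult_mono power_le_one) auto
  finally show "24 * \<theta> * t\<^sup>2 * \<alpha> \<le> 1"
    by simp
  have "10000 * (n * L ^ 3) \<le> C * c0\<^sup>2 * (n * L ^ 3)"
    using Cc0 n Lpos by (intro mult_right_mono) auto
  also have "\<dots> = c0\<^sup>2 * (C * n * L ^ 3)"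
    by (simp add: algebra_simps)
  also have "\<dots> \<le> c0\<^sup>2 * p"
    using p by (intro mult_left_mono) auto
  finally have c0p: "10000 * (n * L ^ 3) \<le> c0\<^sup>2 * p" .
  have "20 * L / \<alpha> \<le> 25 / 10368 * (10000 * (n * L ^ 3)) / (n * L\<^sup>2 * \<alpha>)"
    using n Lpos \<alpha> by (simp add: field_simps power2_eq_square power3_eq_cube)
  also have "\<dots> \<le> 25 / 10368 * (c0\<^sup>2 * p) / (n * L\<^sup>2 * \<alpha>)"
    using c0p n Lpos \<alpha> by (intro divide_right_mono mult_left_mono) auto
  also have "\<dots> = t * s"
    unfolding t_s s_def T r_def[symmetric] using ppos \<theta>pos \<alpha> Lpos n r
    by (simp add: field_simps power2_eq_square)
  finally have "20 * L / \<alpha> \<le> t * s" .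
  moreover have "p * (36 * t\<^sup>2 * \<theta> * (4 * \<alpha>)) = t * s / 2"
    unfolding t_s using ppos \<theta>pos \<alpha> by (simp add: field_simps power2_eq_square)
  ultimately show "- t * (5 / 6 * T) + p * (36 * t\<^sup>2 * \<theta> * (4 * \<alpha>)) \<le> - (10 * L / \<alpha>)"
    by (simp add: s_def)
qed
lemma XT_l1_increment_tail_bound:
  fixes c0 C \<theta> \<alpha> T :: real and n p l :: nat and v w :: "nat \<Rightarrow> real"
  assumes c0: "0 < c0" and C: "10000 / c0\<^sup>2 \<le> C" and L: "c0 + 1 \<le> ln (real n)"
    and \<theta>: "1 / real n \<le> \<theta>" "\<theta> \<le> 1"
    and \<alpha>: "\<alpha> = 2 ^ l * (2 / real n)" "\<alpha> \<le> 1"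
    and v: "(\<Sum>i<n. \<bar>v i\<bar>) \<le> 1" and w: "(\<Sum>i<n. \<bar>w i\<bar>) \<le> 1"
    and vw: "\<forall>i<n. \<bar>v i - w i\<bar> \<le> 2 * \<alpha>"
    and p: "p = nat \<lceil>C * real n * ln (real n) ^ 3\<rceil>"
    and T: "T = c0 * real p * sqrt (\<theta> / real n) / ln (real n)"
    and mu: "\<bar>mu n p \<theta> v - mu n p \<theta> w\<bar> \<le> T / 6"
  shows "measure_pmf.prob (matrix_pmf n p \<theta>) {X. T \<le> \<bar>XT_l1 n p X v - XT_l1 n p X w\<bar>}
         \<le> exp (- 5 * (1 / \<alpha>) * ln (real n))"
proof -
  define L where "L = ln (real n)"
  define K where "K = (\<Sum>i<n. (v i - w i)\<^sup>2)"
  define t where "t = 5 / 6 * T / (288 * real p * \<theta> * \<alpha>)"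
  have "2 \<le> n"
  proof (rule ccontr)
    assume "\<not> 2 \<le> n"
    then have "n = 0 \<or> n = 1"
      by linarith
    then show False
      using L c0 by auto
  qed
  then have "0 < \<alpha>" "real n * \<alpha> = 2 * 2 ^ l"
    using \<alpha>(1) by auto
  moreover have "(1::real) \<le> 2 ^ l"
    by simp
  ultimately have \<alpha>_pos: "0 < \<alpha>" and n\<alpha>: "2 \<le> real n * \<alpha>"
    by linarith+
  have \<theta>_pos: "0 \<le> \<theta>"
    using \<theta>(1) by (simp add: order_trans[OF _ \<theta>(1)])
  have p_lower: "C * real n * L ^ 3 \<le> real p"
    unfolding p L_def by linarith
  note rate = chernoff_rate_bounds[OF c0 C L[folded L_def] \<theta>(1) p_lower \<alpha>_pos n\<alpha> T[folded L_def],
      folded t_def]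
  have K: "K \<le> 4 * \<alpha>"
    using sum_sq_diff_le[OF v w, of "2 * \<alpha>"] vw \<alpha>_pos by (simp add: K_def)
  have "\<forall>i<n. 2 * t * \<bar>v i - w i\<bar> \<le> 1"
    using vw rate(1,2) by (auto intro: order_trans[OF mult_left_mono[of _ "2 * \<alpha>"]])
  moreover have "6 * \<theta> * t\<^sup>2 * K \<le> 1"
  proof -
    have "6 * \<theta> * t\<^sup>2 * K \<le> 6 * \<theta> * t\<^sup>2 * (4 * \<alpha>)"
      using K \<theta>_pos by (intro mult_left_mono) auto
    also have "\<dots> = 24 * \<theta> * t\<^sup>2 * \<alpha>"
      by simp
    finally show ?thesis
      using rate(3) by linarith
  qed
  moreover have "\<bar>mu n p \<theta> v - mu n p \<theta> w\<bar> + 5 / 6 * T \<le> T"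
    using mu by simp
  ultimately have "measure_pmf.prob (matrix_pmf n p \<theta>) {X. T \<le> \<bar>XT_l1 n p X v - XT_l1 n p X w\<bar>}
      \<le> 2 * exp (- t * (5 / 6 * T) + real p * (36 * t\<^sup>2 * \<theta> * K))"
    by (rule XT_l1_increment_deviation[where n = n and v = v and w = w,
          OF \<theta>_pos \<theta>(2) rate(1), folded K_def])
  also have "\<dots> \<le> 2 * exp (- t * (5 / 6 * T) + real p * (36 * t\<^sup>2 * \<theta> * (4 * \<alpha>)))"
    using K \<theta>_pos by (intro mult_left_mono exp_mono add_left_mono) auto
  also have "\<dots> \<le> 2 * exp (- (10 * L / \<alpha>))"
    using rate(4) by simp
  also have "\<dots> \<le> exp (5 * L / \<alpha>) * exp (- (10 * L / \<alpha>))"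
  proof -
    have "ln 2 \<le> 5 * L"
      using ln_2_less_1 L c0 by (simp add: L_def)
    also have "\<dots> \<le> 5 * L / \<alpha>"
      using L c0 \<alpha>_pos \<alpha>(2) by (simp add: L_def le_divide_eq mult_left_le_one_le)
    finally have "2 \<le> exp (5 * L / \<alpha>)"
      by (metis exp_ln exp_le_cancel_iff zero_less_numeral)
    then show ?thesis
      by (intro mult_right_mono) auto
  qed
  also have "\<dots> = exp (- 5 * (1 / \<alpha>) * ln (real n))"
    by (simp add: L_def flip: exp_add)
  finally show ?thesis .
qed

theorem mainTheorem8:
  shows "\<forall>c0::real. c0 > 0 \<longrightarrow> (\<exists>C0::real. C0 > 0 \<and> (\<forall>C::real. C \<ge> C0 \<longrightarrow>
    (\<forall>\<^sub>F n in sequentially.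
      \<forall>\<theta>::real. 1 / real n \<le> \<theta> \<and> \<theta> \<le> 1 \<longrightarrow>
       (let p = nat \<lceil>C * real n * (ln (real n)) ^ 3\<rceil>;
            T = c0 * real p * sqrt (\<theta> / real n) / ln (real n) in
        \<forall>(l::nat) (\<alpha>::real). \<alpha> = 2 ^ l * (2 / real n) \<longrightarrow> \<alpha> \<le> 1 \<longrightarrow>
         (\<forall>v w :: nat \<Rightarrow> real.
            (\<Sum>i<n. \<bar>v i\<bar>) \<le> 1 \<longrightarrow> (\<Sum>i<n. \<bar>w i\<bar>) \<le> 1 \<longrightarrow>
            (\<forall>i<n. \<bar>v i - w i\<bar> \<le> 2 * \<alpha>) \<longrightarrow>
            \<bar>mu n p \<theta> v - mu n p \<theta> w\<bar> \<le> T / 6 \<longrightarrow>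
            measure_pmf.prob (matrix_pmf n p \<theta>)
              {X. \<bar>XT_l1 n p X v - XT_l1 n p X w\<bar> \<ge> T}
            \<le> exp (- 5 * (1 / \<alpha>) * ln (real n)))))))"
proof (intro allI impI, goal_cases)
  case (1 c0)
  have ln_large: "\<forall>\<^sub>F n in sequentially. c0 + 1 \<le> ln (real n)"
    using filterlim_compose[OF ln_at_top filterlim_real_sequentially] by (simp add: filterlim_at_top)
  show ?case
    unfolding Let_def
  proof (intro exI[of _ "10000 / c0\<^sup>2"] conjI allI impI eventually_mono[OF ln_large])
    show "0 < 10000 / c0\<^sup>2"
      using 1 by simp
  qed (rule XT_l1_increment_tail_bound[OF 1]; auto)
qed

end
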